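(* Let $\beta\in\mathbb{N}=\{0,1,2,\dots\}$, let $\alpha,\lambda\in\mathbb{D}\setminus\{0\}$, let $\phi_\alpha(z)=\dfrac{\alpha-z}{1-\overline{\alpha}z}$, and let $\phi=\phi_\alpha\circ(\lambda\phi_\alpha)$, i.e. $\phi(z)=\phi_\alpha(\lambda\phi_\alpha(z))$. Then the composition operator $C_\phi f=f\circ\phi$ is not complex symmetric on $A^2_\beta$.
   Context: $\mathbb{D}$ is the open unit disc. For $\beta>-1$, $A^2_\beta$ is the Hilbert space of analytic functions $f(z)=\sum_{n\ge0}\widehat f(n)z^n$ on $\mathbb{D}$ with inner product $\langle f,g\rangle=\sum_{n\ge0}\frac{n!\,\Gamma(2+\beta)}{\Gamma(n+2+\beta)}\widehat f(n)\overline{\widehat g(n)}$ (equivalently the $L^2$ inner product with respect to $(\beta+1)(1-|z|^2)^\beta dA(z)$). A conjugation is a conjugate-linear map $C$ with $C^2=I$ and $\langle Cf,Cg\rangle=\langle g,f\rangle$; a bounded operator $T$ is complex symmetric if $CT=T^*C$ for some conjugation $C$. *)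

theory Defs
  imports "HOL-Complex_Analysis.Complex_Analysis"
begin

definition bergman_weight :: "real \<Rightarrow> nat \<Rightarrow> real" where
  "bergman_weight \<beta> n = fact n * Gamma (2 + \<beta>) / Gamma (real n + 2 + \<beta>)"

definition taylor_coeff :: "(complex \<Rightarrow> complex) \<Rightarrow> nat \<Rightarrow> complex" where
  "taylor_coeff f n = (deriv ^^ n) f 0 / of_nat (fact n)"

text \<open>A^2_beta: analytic functions on the unit disc (normalised to 0 off the disc,
  so that elements are identified with their restriction to the disc) with finite norm.\<close>
definition A2 :: "real \<Rightarrow> (complex \<Rightarrow> complex) set" where
  "A2 \<beta> = {f. f holomorphic_on ball 0 1 \<and> (\<forall>z. z \<notin> ball 0 1 \<longrightarrow> f z = 0) \<and>
             summable (\<lambda>n. bergman_weight \<beta> n * (cmod (taylor_coeff f n))\<^sup>2)}"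

definition A2_inner :: "real \<Rightarrow> (complex \<Rightarrow> complex) \<Rightarrow> (complex \<Rightarrow> complex) \<Rightarrow> complex" where
  "A2_inner \<beta> f g = (\<Sum>n. of_real (bergman_weight \<beta> n) * taylor_coeff f n * cnj (taylor_coeff g n))"

definition comp_op :: "(complex \<Rightarrow> complex) \<Rightarrow> (complex \<Rightarrow> complex) \<Rightarrow> (complex \<Rightarrow> complex)" where
  "comp_op \<phi> f = (\<lambda>z. if z \<in> ball 0 1 then f (\<phi> z) else 0)"

definition disc_auto :: "complex \<Rightarrow> complex \<Rightarrow> complex" where
  "disc_auto a z = (a - z) / (1 - cnj a * z)"

definition conjugation_on ::
  "(complex \<Rightarrow> complex) set \<Rightarrow> ((complex \<Rightarrow> complex) \<Rightarrow> (complex \<Rightarrow> complex) \<Rightarrow> complex) \<Rightarrow> ((complex \<Rightarrow> complex) \<Rightarrow> (complex \<Rightarrow> complex)) \<Rightarrow> bool" where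
  "conjugation_on H ip C \<longleftrightarrow>
     C ` H \<subseteq> H \<and>
     (\<forall>f\<in>H. \<forall>g\<in>H. C (\<lambda>z. f z + g z) = (\<lambda>z. C f z + C g z)) \<and>
     (\<forall>c::complex. \<forall>f\<in>H. C (\<lambda>z. c * f z) = (\<lambda>z. cnj c * C f z)) \<and>
     (\<forall>f\<in>H. C (C f) = f) \<and>
     (\<forall>f\<in>H. \<forall>g\<in>H. ip (C f) (C g) = ip g f)"

definition is_adjoint_on ::
  "'a set \<Rightarrow> ('a \<Rightarrow> 'a \<Rightarrow> complex) \<Rightarrow> ('a \<Rightarrow> 'a) \<Rightarrow> ('a \<Rightarrow> 'a) \<Rightarrow> bool" where
  "is_adjoint_on H ip T S \<longleftrightarrow> S ` H \<subseteq> H \<and> (\<forall>f\<in>H. \<forall>g\<in>H. ip (T f) g = ip f (S g))"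

definition complex_symmetric_on ::
  "(complex \<Rightarrow> complex) set \<Rightarrow> ((complex \<Rightarrow> complex) \<Rightarrow> (complex \<Rightarrow> complex) \<Rightarrow> complex) \<Rightarrow> ((complex \<Rightarrow> complex) \<Rightarrow> (complex \<Rightarrow> complex)) \<Rightarrow> bool" where
  "complex_symmetric_on H ip T \<longleftrightarrow>
     (\<exists>C S. conjugation_on H ip C \<and> is_adjoint_on H ip T S \<and> (\<forall>f\<in>H. C (T f) = S (C f)))"

end

theory Submission
  imports Defs
begin

text \<open>
  Suppose \<open>C T = T\<^sup>* C\<close> for \<open>T = C\<^sub>\<phi>\<close> and put \<open>\<psi> = \<phi>\<^sub>\<alpha>\<close>. Since \<open>\<psi> \<circ> \<phi> = \<lambda> \<psi>\<close>, the functions \<open>1\<close>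
  and \<open>\<psi>\<close> are eigenvectors of \<open>T\<close> with eigenvalues \<open>1\<close> and \<open>\<lambda>\<close>, so \<open>w\<^sub>0 = C 1\<close> and \<open>w\<^sub>1 = C \<psi>\<close>
  are eigenvectors of \<open>T\<^sup>*\<close>, and their Gram matrix is that of \<open>1, \<psi>\<close> transposed.
  The iterates \<open>\<phi>\<^sup>k = \<psi> \<circ> (\<lambda>\<^sup>k \<cdot>) \<circ> \<psi>\<close> converge to \<open>\<alpha>\<close> geometrically on a neighbourhood of the closed
  disc; pairing \<open>(\<phi>\<^sup>k)\<^sup>n\<close> with \<open>w\<^sub>0\<close> and \<open>w\<^sub>1\<close> therefore pins down \<open>\<langle>z\<^sup>n, w\<^sub>0\<rangle> = \<alpha>\<^sup>n \<langle>1, w\<^sub>0\<rangle>\<close>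
  and \<open>\<langle>z\<^sup>n, w\<^sub>1\<rangle> = n \<alpha>\<^sup>n\<^sup>-\<^sup>1 (|\<alpha>|\<^sup>2 - 1) \<langle>\<psi>, w\<^sub>1\<rangle>\<close>, i.e. all Taylor coefficients of
  \<open>w\<^sub>0, w\<^sub>1\<close>. Parseval then expresses the Gram entries through the three series
  \<open>\<Sum> t\<^sup>n/\<omega>\<^sub>n\<close>, \<open>\<Sum> n t\<^sup>n\<^sup>-\<^sup>1/\<omega>\<^sub>n\<close>, \<open>\<Sum> n\<^sup>2 t\<^sup>n\<^sup>-\<^sup>1/\<omega>\<^sub>n\<close> (\<open>t = |\<alpha>|\<^sup>2\<close>, \<open>\<omega>\<^sub>n\<close> the weights),
  which the recursion of the weights ties together. The outcome \<open>\<parallel>\<psi>\<parallel>\<^sup>2 = |\<alpha>|\<^sup>2 + 1/(\<beta>+2)\<close>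
  contradicts the direct computation \<open>\<parallel>\<psi>\<parallel>\<^sup>2 < |\<alpha>|\<^sup>2 + 1/(\<beta>+2)\<close>.
\<close>

lemma norm_le_geometric_imp_eq_0:
  fixes x :: "'a::real_normed_vector"
  assumes "\<bar>q\<bar> < 1" and "\<And>k. norm x \<le> C * q ^ k"
  shows "x = 0"
proof -
  have "(\<lambda>k. C * q ^ k) \<longlonglongrightarrow> 0"
    using assms(1) by (intro tendsto_mult_right_zero LIMSEQ_power_zero) simp
  then have "norm x \<le> 0"
    using assms(2) by (intro LIMSEQ_le_const) auto
  then show ?thesis by simp
qed

lemma sums_complex_of_real_iff:
  "(\<lambda>n. complex_of_real (f n)) sums z \<longleftrightarrow> f sums Re z \<and> Im z = 0"
proof
  assume z: "(\<lambda>n. complex_of_real (f n)) sums z"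
  then have "f sums suminf f"
    using summable_of_real_iff[where 'a = complex] by (auto simp: sums_iff summable_sums)
  moreover from this have "z = of_real (suminf f)"
    using z sums_of_real_iff[where 'a = complex] sums_unique2 by blast
  ultimately show "f sums Re z \<and> Im z = 0" by simp
next
  assume "f sums Re z \<and> Im z = 0"
  moreover from this have "z = of_real (Re z)"
    by (simp add: complex_eq_iff)
  ultimately show "(\<lambda>n. complex_of_real (f n)) sums z"
    using sums_of_real_iff[where 'a = complex, of f "Re z"] by metis
qed

lemma sums_Suc_unique:
  fixes f :: "nat \<Rightarrow> 'a::real_normed_vector"
  assumes "f sums F" "f 0 = 0" "(\<lambda>n. f (Suc n)) sums G"
  shows "F = G"
  using assms sums_Suc_iff[of f G] sums_unique2 by auto

lemma sums_mult_nonzero_sum: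
  fixes c :: "'a::real_normed_field"
  assumes "(\<lambda>n. c * f n) sums s" "s \<noteq> 0"
  shows "c \<noteq> 0" "f sums (s / c)"
proof -
  show "c \<noteq> 0"
    using assms sums_unique2[OF _ sums_zero] by fastforce
  then show "f sums (s / c)"
    using sums_mult[OF assms(1), of "1 / c"] by simp
qed

lemma complex_symmetric_adjoint_eigenvector:
  assumes "conjugation_on H ip C" "is_adjoint_on H ip T S" "\<forall>f\<in>H. C (T f) = S (C f)"
    and scale_right: "\<And>f g c. f \<in> H \<Longrightarrow> g \<in> H \<Longrightarrow> ip f (\<lambda>z. c * g z) = cnj c * ip f g"
    and "u \<in> H" "T u = (\<lambda>z. \<mu> * u z)" "f \<in> H"
  shows "ip (T f) (C u) = \<mu> * ip f (C u)"
proof -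
  have Cu: "C u \<in> H" using assms(1,5) by (auto simp: conjugation_on_def)
  have "ip (T f) (C u) = ip f (S (C u))"
    using assms(2,7) Cu by (simp add: is_adjoint_on_def)
  also have "S (C u) = C (T u)"
    using assms(3,5) by simp
  also have "\<dots> = (\<lambda>z. cnj \<mu> * C u z)"
    using assms(1,5,6) by (simp add: conjugation_on_def)
  finally show ?thesis
    using scale_right[OF assms(7) Cu] by simp
qed

section \<open>Taylor coefficients and remainders\<close>

definition disc_restrict :: "(complex \<Rightarrow> complex) \<Rightarrow> complex \<Rightarrow> complex" where
  "disc_restrict g = (\<lambda>z. if z \<in> ball 0 1 then g z else 0)"

lemma taylor_coeff_disc_restrict [simp]: "taylor_coeff (disc_restrict g) n = taylor_coeff g n"
proof -
  have "eventually (\<lambda>z. disc_restrict g z = g z) (nhds 0)"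
    using eventually_nhds_in_open[of "ball (0::complex) 1" 0]
    by (auto simp: disc_restrict_def elim!: eventually_mono)
  then show ?thesis unfolding taylor_coeff_def by (simp add: higher_deriv_cong_ev)
qed

lemma holomorphic_on_disc_restrict:
  "g holomorphic_on ball 0 1 \<Longrightarrow> disc_restrict g holomorphic_on ball 0 1"
  by (rule holomorphic_transform) (auto simp: disc_restrict_def)

lemma taylor_coeff_eqI:
  assumes "0 < r" and "\<And>u. u \<in> ball 0 r \<Longrightarrow> (\<lambda>n. c n * u ^ n) sums f u"
  shows "taylor_coeff f n = c n"
proof -
  have "eventually (\<lambda>u. (\<lambda>n. fps_nth (Abs_fps c) n * u ^ n) sums f u) (nhds 0)"
    using eventually_nhds_in_open[of "ball (0::complex) r" 0] assms by (auto elim!: eventually_mono)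
  then have "f has_fps_expansion Abs_fps c" by (rule has_fps_expansionI)
  from fps_nth_fps_expansion[OF this, of n] show ?thesis by (simp add: taylor_coeff_def)
qed

lemma taylor_coeff_const: "taylor_coeff (\<lambda>z. c) n = (if n = 0 then c else 0)"
  unfolding taylor_coeff_def by simp

lemma taylor_coeff_power: "taylor_coeff (\<lambda>z. z ^ k) n = (if n = k then 1 else 0)"
proof (rule taylor_coeff_eqI[of 1])
  fix u :: complex
  have "(\<lambda>n. (if n = k then 1 else 0) * u ^ n) = (\<lambda>n. if n = k then u ^ n else 0)"
    by auto
  then show "(\<lambda>n. (if n = k then 1 else 0) * u ^ n) sums u ^ k"
    using sums_single[of k "\<lambda>n. u ^ n"] by simp
qed simp

lemma taylor_coeff_linear:
  assumes "f holomorphic_on A" "g holomorphic_on A" "open A" "0 \<in> A"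
  shows "taylor_coeff (\<lambda>z. c * f z + d * g z) n = c * taylor_coeff f n + d * taylor_coeff g n"
proof -
  have hol: "(\<lambda>z. c * f z) holomorphic_on A" "(\<lambda>z. d * g z) holomorphic_on A"
    using assms(1,2) by (auto intro!: holomorphic_intros)
  have "(deriv ^^ n) (\<lambda>z. c * f z + d * g z) 0
      = (deriv ^^ n) (\<lambda>z. c * f z) 0 + (deriv ^^ n) (\<lambda>z. d * g z) 0"
    by (rule higher_deriv_add[OF hol assms(3,4)])
  also have "\<dots> = c * (deriv ^^ n) f 0 + d * (deriv ^^ n) g 0"
    by (simp only: higher_deriv_cmult[OF assms(1,4,3)] higher_deriv_cmult[OF assms(2,4,3)])
  finally show ?thesis by (simp add: taylor_coeff_def add_divide_distrib)
qed

lemma norm_taylor_coeff_le: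
  assumes "f holomorphic_on ball 0 \<rho>" "0 < r" "r < \<rho>" "\<And>z. norm z = r \<Longrightarrow> norm (f z) \<le> B"
  shows "norm (taylor_coeff f n) \<le> B / r ^ n"
proof -
  have "norm ((deriv ^^ n) f 0) \<le> fact n * B / r ^ n"
  proof (rule Cauchy_inequality)
    show "f holomorphic_on ball 0 r"
      by (rule holomorphic_on_subset[OF assms(1)]) (use assms(3) in auto)
    show "continuous_on (cball 0 r) f"
      using assms(3) by (intro holomorphic_on_imp_continuous_on holomorphic_on_subset[OF assms(1)]) auto
  qed (use assms in auto)
  then have "norm ((deriv ^^ n) f 0) / fact n \<le> (fact n * B / r ^ n) / fact n"
    by (rule divide_right_mono) simp
  then show ?thesis
    by (simp add: taylor_coeff_def norm_divide)
qed

lemma holomorphic_bounded_on_sphere: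
  assumes "f holomorphic_on ball 0 \<rho>" "r < \<rho>"
  obtains B where "\<And>z. norm z = r \<Longrightarrow> norm (f z) \<le> B"
proof -
  have "continuous_on (sphere 0 r) f"
    using assms by (intro holomorphic_on_imp_continuous_on holomorphic_on_subset[OF assms(1)]) auto
  then have "bounded (f ` sphere 0 r)"
    by (intro compact_imp_bounded compact_continuous_image) auto
  then show ?thesis
    using that unfolding bounded_iff by fastforce
qed

lemma holomorphic_quadratic_tail_sums:
  assumes "f holomorphic_on ball 0 R" "u \<in> ball 0 R"
  shows "(\<lambda>i. taylor_coeff f (i + 2) * u ^ (i + 2)) sums (f u - f 0 - deriv f 0 * u)"
proof -
  have "(\<lambda>n. taylor_coeff f n * u ^ n) sums f u"
    using holomorphic_power_series[OF assms] by (simp add: taylor_coeff_def)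
  then show ?thesis
    by (subst sums_iff_shift) (simp add: taylor_coeff_def numeral_2_eq_2)
qed

text \<open>The tail coefficients decay geometrically by the Cauchy estimates on a circle between
  \<open>\<rho>\<close> and \<open>R\<close>.\<close>
lemma holomorphic_quadratic_remainder:
  assumes hol: "f holomorphic_on ball 0 R" and "0 \<le> \<rho>" "\<rho> < R"
  obtains K where "0 \<le> K" "\<And>u. norm u \<le> \<rho> \<Longrightarrow> norm (f u - f 0 - deriv f 0 * u) \<le> K * (norm u)\<^sup>2"
proof -
  define r where "r = (\<rho> + R) / 2"
  have r: "\<rho> < r" "r < R" "0 < r" using assms by (auto simp: r_def)
  obtain B where B: "\<And>z. norm z = r \<Longrightarrow> norm (f z) \<le> B"
    using holomorphic_bounded_on_sphere[OF hol r(2)] by blast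
  have "0 \<le> B"
    using B[of "of_real r"] r(3) by (auto intro: order_trans[OF norm_ge_zero])
  define K where "K = B / r\<^sup>2 * (1 / (1 - \<rho> / r))"
  have "norm (f u - f 0 - deriv f 0 * u) \<le> K * (norm u)\<^sup>2" if u: "norm u \<le> \<rho>" for u
  proof (rule norm_sums_le[OF holomorphic_quadratic_tail_sums[OF hol]])
    show "u \<in> ball 0 R" using u r by simp
    show "(\<lambda>i. B / r\<^sup>2 * (\<rho> / r) ^ i * (norm u)\<^sup>2) sums (K * (norm u)\<^sup>2)"
      unfolding K_def using r assms(2) by (intro sums_mult2 sums_mult geometric_sums) auto
    fix i
    have "norm (taylor_coeff f (i + 2)) * norm u ^ i \<le> B / r ^ (i + 2) * \<rho> ^ i"
      using norm_taylor_coeff_le[OF hol r(3,2) B, of "i + 2"] u \<open>0 \<le> B\<close> r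
      by (intro mult_mono power_mono) auto
    also have "\<dots> = B / r\<^sup>2 * (\<rho> / r) ^ i"
      by (simp add: power_add power_divide power2_eq_square field_simps)
    finally have "norm (taylor_coeff f (i + 2)) * norm u ^ i * (norm u)\<^sup>2 \<le> B / r\<^sup>2 * (\<rho> / r) ^ i * (norm u)\<^sup>2"
      by (rule mult_right_mono) simp
    then show "norm (taylor_coeff f (i + 2) * u ^ (i + 2)) \<le> B / r\<^sup>2 * (\<rho> / r) ^ i * (norm u)\<^sup>2"
      by (simp add: norm_mult norm_power power2_eq_square mult_ac)
  qed
  moreover have "0 \<le> K"
    unfolding K_def using \<open>0 \<le> B\<close> r by (simp add: divide_simps)
  ultimately show ?thesis using that by blast
qed

lemma holomorphic_linear_remainder:
  assumes "f holomorphic_on ball 0 R" and "0 \<le> \<rho>" "\<rho> < R"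
  obtains K where "0 \<le> K" "\<And>u. norm u \<le> \<rho> \<Longrightarrow> norm (f u - f 0) \<le> K * norm u"
proof -
  obtain K where K: "0 \<le> K" "\<And>u. norm u \<le> \<rho> \<Longrightarrow> norm (f u - f 0 - deriv f 0 * u) \<le> K * (norm u)\<^sup>2"
    using holomorphic_quadratic_remainder[OF assms] by blast
  have "norm (f u - f 0) \<le> (norm (deriv f 0) + K * \<rho>) * norm u" if u: "norm u \<le> \<rho>" for u
  proof -
    have "norm (f u - f 0) \<le> norm (deriv f 0 * u) + norm (f u - f 0 - deriv f 0 * u)"
      by (rule norm_triangle_sub)
    also have "\<dots> \<le> norm (deriv f 0) * norm u + K * (\<rho> * norm u)"
      using K(2)[OF u] mult_left_mono[OF mult_right_mono[OF u norm_ge_zero[of u]] K(1)]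
      by (simp add: norm_mult power2_eq_square)
    finally show ?thesis by (simp add: algebra_simps)
  qed
  moreover have "0 \<le> norm (deriv f 0) + K * \<rho>"
    using K(1) assms(2) by simp
  ultimately show ?thesis using that by blast
qed

lemma holomorphic_scaled_remainders:
  assumes "F holomorphic_on ball 0 R" "0 \<le> s" "s < R"
  obtains K where
    "\<And>m v. norm m \<le> 1 \<Longrightarrow> norm v \<le> s \<Longrightarrow> norm (F (m * v) - F 0) \<le> K * norm m"
    "\<And>m v. norm m \<le> 1 \<Longrightarrow> norm v \<le> s \<Longrightarrow>
      norm (F (m * v) - F 0 - deriv F 0 * (m * v)) \<le> K * (norm m)\<^sup>2"
proof -
  obtain K1 where K1: "0 \<le> K1" "\<And>u. norm u \<le> s \<Longrightarrow> norm (F u - F 0) \<le> K1 * norm u"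
    using holomorphic_linear_remainder[OF assms] by blast
  obtain K2 where K2: "0 \<le> K2" "\<And>u. norm u \<le> s \<Longrightarrow> norm (F u - F 0 - deriv F 0 * u) \<le> K2 * (norm u)\<^sup>2"
    using holomorphic_quadratic_remainder[OF assms] by blast
  define K where "K = max (K1 * s) (K2 * s\<^sup>2)"
  show ?thesis
  proof
    fix m v :: complex
    assume m: "norm m \<le> 1" and v: "norm v \<le> s"
    have mv: "norm (m * v) \<le> norm m * s"
      using v by (simp add: norm_mult mult_left_mono)
    also have "\<dots> \<le> s"
      using m assms(2) by (rule mult_left_le_one_le[rotated 2]) simp
    finally have "norm (m * v) \<le> s" .
    then show "norm (F (m * v) - F 0) \<le> K * norm m"
      using K1(2)[of "m * v"] mult_left_mono[OF mv K1(1)]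
        mult_right_mono[OF max.cobounded1[of "K1 * s" "K2 * s\<^sup>2"] norm_ge_zero[of m]]
      by (simp add: K_def mult_ac)
    show "norm (F (m * v) - F 0 - deriv F 0 * (m * v)) \<le> K * (norm m)\<^sup>2"
      using K2(2)[OF \<open>norm (m * v) \<le> s\<close>] mult_left_mono[OF power_mono[OF mv norm_ge_zero, of 2] K2(1)]
        mult_right_mono[OF max.cobounded2[of "K2 * s\<^sup>2" "K1 * s"] zero_le_power2[of "norm m"]]
      by (simp add: K_def power_mult_distrib mult_ac max.commute)
  qed
qed

section \<open>Disc automorphisms and conjugated dilations\<close>

lemma norm_disc_auto_denominator_pos:
  assumes "norm a < 1" "norm z \<le> 1"
  shows "0 < norm (1 - cnj a * z)"
proof -
  have "norm a * norm z \<le> norm a"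
    using assms by (intro mult_left_le) auto
  then have "norm (cnj a * z) < 1"
    using assms by (simp add: norm_mult)
  then show ?thesis by auto
qed

lemma norm_disc_auto_identity:
  "(norm (1 - cnj a * z))\<^sup>2 - (norm (a - z))\<^sup>2 = (1 - (norm a)\<^sup>2) * (1 - (norm z)\<^sup>2)"
  unfolding cmod_power2 by (simp add: power2_eq_square algebra_simps)

lemma norm_disc_auto_le_1:
  assumes "norm a < 1" "norm z \<le> 1"
  shows "norm (disc_auto a z) \<le> 1"
proof -
  have "0 \<le> (1 - (norm a)\<^sup>2) * (1 - (norm z)\<^sup>2)"
    using assms by (intro mult_nonneg_nonneg) (auto simp: abs_square_le_1)
  then have "(norm (a - z))\<^sup>2 \<le> (norm (1 - cnj a * z))\<^sup>2"
    using norm_disc_auto_identity[of a z] by linarith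
  then have "norm (a - z) \<le> norm (1 - cnj a * z)"
    by (rule power2_le_imp_le) simp
  then show ?thesis
    using norm_disc_auto_denominator_pos[OF assms] by (simp add: disc_auto_def norm_divide)
qed

lemma disc_auto_in_ball:
  assumes "norm a < 1" "z \<in> ball 0 1"
  shows "disc_auto a z \<in> ball 0 1"
proof -
  have "0 < (1 - (norm a)\<^sup>2) * (1 - (norm z)\<^sup>2)"
    using assms by (intro mult_pos_pos) (auto simp: abs_square_less_1)
  then have "(norm (a - z))\<^sup>2 < (norm (1 - cnj a * z))\<^sup>2"
    using norm_disc_auto_identity[of a z] by linarith
  then have "norm (a - z) < norm (1 - cnj a * z)"
    by (rule power2_less_imp_less) simp
  then show ?thesis
    using norm_disc_auto_denominator_pos[of a z] assms by (simp add: disc_auto_def norm_divide)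
qed

lemma disc_auto_disc_auto:
  assumes "norm a < 1" "norm z \<le> 1"
  shows "disc_auto a (disc_auto a z) = z"
proof -
  define D where "D = 1 - cnj a * z"
  have D: "D \<noteq> 0"
    using norm_disc_auto_denominator_pos[OF assms] by (auto simp: D_def)
  have "1 - cnj a * a \<noteq> 0"
    using norm_disc_auto_denominator_pos[of a a] assms(1) by auto
  moreover have "a - (a - z) / D = z * (1 - cnj a * a) / D" "1 - cnj a * ((a - z) / D) = (1 - cnj a * a) / D"
    using D by (simp_all add: field_simps D_def)
  ultimately show ?thesis
    using D by (simp add: disc_auto_def D_def[symmetric])
qed

lemma holomorphic_on_disc_auto:
  assumes "norm a * R \<le> 1"
  shows "disc_auto a holomorphic_on ball 0 R"
proof -
  have "1 - cnj a * z \<noteq> 0" if "z \<in> ball 0 R" for z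
  proof (cases "a = 0")
    case False
    then have "norm a * norm z < norm a * R"
      using that by (intro mult_strict_left_mono) auto
    with assms have "norm (cnj a * z) < 1"
      by (simp add: norm_mult)
    then show ?thesis by auto
  qed simp
  then show ?thesis
    unfolding disc_auto_def[abs_def] by (intro holomorphic_intros) auto
qed

lemma has_field_derivative_disc_auto:
  assumes "cnj a * z \<noteq> 1"
  shows "(disc_auto a has_field_derivative (a * cnj a - 1) / (1 - cnj a * z)\<^sup>2) (at z)"
proof -
  have "1 - cnj a * z \<noteq> 0" using assms by simp
  then have "((\<lambda>z. (a - z) / (1 - cnj a * z)) has_field_derivative
      ((0 - 1) * (1 - cnj a * z) - (a - z) * (0 - cnj a * 1)) / ((1 - cnj a * z) * (1 - cnj a * z))) (at z)"
    by (intro DERIV_divide DERIV_diff DERIV_cmult DERIV_const DERIV_ident)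
  then show ?thesis
    unfolding disc_auto_def[abs_def]
    by (rule DERIV_cong) (simp add: power2_eq_square algebra_simps)
qed

lemma deriv_disc_auto_power_0:
  "deriv (\<lambda>u. disc_auto a u ^ n) 0 = of_nat n * a ^ (n - 1) * (a * cnj a - 1)"
proof -
  have "((\<lambda>u. disc_auto a u ^ n) has_field_derivative
          of_nat n * ((a * cnj a - 1) * disc_auto a 0 ^ (n - 1))) (at 0)"
    using DERIV_power[OF has_field_derivative_disc_auto[of a 0]] by simp
  then show ?thesis
    by (simp add: DERIV_imp_deriv disc_auto_def mult_ac)
qed

lemma taylor_coeff_disc_auto:
  assumes "norm a < 1"
  shows "taylor_coeff (disc_auto a) n = (if n = 0 then a else (a * cnj a - 1) * cnj a ^ (n - 1))"
proof (rule taylor_coeff_eqI[of 1])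
  fix u :: complex
  assume u: "u \<in> ball 0 1"
  have au: "norm (cnj a * u) < 1"
    using u assms mult_strict_mono'[of "norm a" 1 "norm u" 1] by (simp add: norm_mult)
  then have nz: "1 - cnj a * u \<noteq> 0" by auto
  have "(\<lambda>m. (a * cnj a - 1) * u * (cnj a * u) ^ m) sums ((a * cnj a - 1) * u / (1 - cnj a * u))"
    using sums_mult[OF geometric_sums[OF au], of "(a * cnj a - 1) * u"] by simp
  moreover have "(\<lambda>m. (a * cnj a - 1) * u * (cnj a * u) ^ m)
      = (\<lambda>m. (a * cnj a - 1) * cnj a ^ m * u ^ Suc m)"
    by (simp add: power_mult_distrib mult_ac)
  ultimately have "(\<lambda>m. (if Suc m = 0 then a else (a * cnj a - 1) * cnj a ^ (Suc m - 1)) * u ^ Suc m)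
      sums ((a * cnj a - 1) * u / (1 - cnj a * u))"
    by simp
  then have "(\<lambda>n. (if n = 0 then a else (a * cnj a - 1) * cnj a ^ (n - 1)) * u ^ n)
      sums ((a * cnj a - 1) * u / (1 - cnj a * u) + a)"
    by (subst (asm) sums_Suc_iff) simp
  also have "(a * cnj a - 1) * u / (1 - cnj a * u) + a = disc_auto a u"
    using nz by (simp add: disc_auto_def field_simps)
  finally show "(\<lambda>n. (if n = 0 then a else (a * cnj a - 1) * cnj a ^ (n - 1)) * u ^ n) sums disc_auto a u" .
qed simp

lemma ball_subset_Union_ball_cball:
  fixes r e :: real
  assumes "0 \<le> r" "0 < e"
  shows "ball (0 :: 'a::real_normed_vector) (r + e) \<subseteq> (\<Union>x\<in>cball 0 r. ball x e)"
proof
  fix z :: 'a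
  assume z: "z \<in> ball 0 (r + e)"
  show "z \<in> (\<Union>x\<in>cball 0 r. ball x e)"
  proof (cases "norm z \<le> r")
    case True
    then show ?thesis using assms(2) by force
  next
    case False
    then have z0: "0 < norm z" using assms(1) by linarith
    define x where "x = (r / norm z) *\<^sub>R z"
    have "x - z = (r / norm z - 1) *\<^sub>R z"
      by (simp add: x_def scaleR_diff_left)
    then have "dist x z = \<bar>r / norm z - 1\<bar> * norm z"
      by (simp add: dist_norm)
    also have "\<dots> = norm z - r"
      using False z0 by (simp add: abs_if divide_simps algebra_simps)
    finally have "dist x z = norm z - r" .
    moreover have "x \<in> cball 0 r"
      using z0 assms(1) by (simp add: x_def)
    ultimately show ?thesis
      using z by force
  qed
qed

text \<open>A compactness argument: \<open>disc_auto a\<close> maps the closed unit disc into itself.\<close>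
lemma disc_auto_near_closed_disc:
  assumes "norm a < 1"
  obtains \<rho> R s where "1 < \<rho>" "\<rho> \<le> R" "0 \<le> s" "s < R" "norm a * R \<le> 1"
    "\<And>z. norm z < \<rho> \<Longrightarrow> norm (disc_auto a z) \<le> s"
proof -
  define R where "R = 2 / (1 + norm a)"
  define s where "s = (1 + R) / 2"
  have "0 < 1 + norm a" by (simp add: add_pos_nonneg)
  then have R: "1 < R" "norm a * R \<le> 1"
    using assms by (simp_all add: R_def divide_simps)
  have s: "1 < s" "s < R"
    using R by (auto simp: s_def)
  define U where "U = ball 0 R \<inter> disc_auto a -` ball 0 s"
  have "continuous_on (ball 0 R) (disc_auto a)"
    by (rule holomorphic_on_imp_continuous_on[OF holomorphic_on_disc_auto[OF R(2)]])
  then have "open U"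
    unfolding U_def by (rule continuous_open_preimage) auto
  moreover have "cball 0 1 \<subseteq> U"
  proof
    fix z :: complex assume "z \<in> cball 0 1"
    then show "z \<in> U"
      using norm_disc_auto_le_1[OF assms, of z] R s by (simp add: U_def)
  qed
  ultimately obtain e where e: "0 < e" "(\<Union>x\<in>cball 0 1. ball x e) \<subseteq> U"
    by (rule compact_subset_open_imp_ball_epsilon_subset[OF compact_cball])
  define \<rho> where "\<rho> = min R (1 + e)"
  have "ball (0 :: complex) \<rho> \<subseteq> ball 0 (1 + e)"
    by (rule subset_ball) (simp add: \<rho>_def)
  also have "\<dots> \<subseteq> (\<Union>x\<in>cball 0 1. ball x e)"
    by (rule ball_subset_Union_ball_cball) (use e in auto)
  also have "\<dots> \<subseteq> U"
    by (rule e(2))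
  finally have "ball 0 \<rho> \<subseteq> U" .
  then have "norm (disc_auto a z) \<le> s" if "norm z < \<rho>" for z
    using that by (auto simp: U_def)
  moreover have "1 < \<rho>" "\<rho> \<le> R"
    using R e by (auto simp: \<rho>_def)
  ultimately show ?thesis
    using s R by (intro that) auto
qed

text \<open>The
  symbol \<open>\<phi>\<close> of the theorem is \<open>conj_dilation \<alpha> \<lambda>\<close>, and its \<open>k\<close>-th iterate is \<open>conj_dilation \<alpha> (\<lambda>\<^sup>k)\<close>.\<close>
definition conj_dilation :: "complex \<Rightarrow> complex \<Rightarrow> complex \<Rightarrow> complex" where
  "conj_dilation a m z = disc_auto a (m * disc_auto a z)"

context
  fixes a m :: complex
  assumes a: "norm a < 1" and m: "norm m \<le> 1"
begin

lemma scaled_disc_auto_in_ball: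
  assumes "z \<in> ball 0 1"
  shows "m * disc_auto a z \<in> ball 0 1"
proof -
  have "norm (disc_auto a z) < 1"
    using disc_auto_in_ball[OF a assms] by simp
  moreover have "norm m * norm (disc_auto a z) \<le> norm (disc_auto a z)"
    using m by (intro mult_left_le_one_le) auto
  ultimately show ?thesis by (simp add: norm_mult)
qed

lemma conj_dilation_in_ball: "z \<in> ball 0 1 \<Longrightarrow> conj_dilation a m z \<in> ball 0 1"
  unfolding conj_dilation_def by (intro disc_auto_in_ball[OF a] scaled_disc_auto_in_ball)

lemma disc_auto_conj_dilation:
  assumes "z \<in> ball 0 1"
  shows "disc_auto a (conj_dilation a m z) = m * disc_auto a z"
  using scaled_disc_auto_in_ball[OF assms] unfolding conj_dilation_def
  by (intro disc_auto_disc_auto[OF a]) simp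

end

lemma conj_dilation_conj_dilation:
  assumes "norm a < 1" "norm l \<le> 1" "z \<in> ball 0 1"
  shows "conj_dilation a m (conj_dilation a l z) = conj_dilation a (m * l) z"
  using disc_auto_conj_dilation[OF assms] by (simp add: conj_dilation_def mult.assoc)

lemma conj_dilation_1: "norm a < 1 \<Longrightarrow> z \<in> ball 0 1 \<Longrightarrow> conj_dilation a 1 z = z"
  by (simp add: conj_dilation_def disc_auto_disc_auto)

text \<open>Writing \<open>(conj_dilation a m z)^n = F (m * disc_auto a z)\<close> with \<open>F = (disc_auto a)^n\<close>, the bounds
  are the Taylor remainders of \<open>F\<close> at \<open>0\<close>, made uniform on a circle of radius \<open>r > 1\<close>.\<close>
lemma conj_dilation_power_expansion:
  assumes "norm a < 1"
  obtains \<rho> r K where "1 < r" "r < \<rho>" "disc_auto a holomorphic_on ball 0 \<rho>"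
    "\<And>m. norm m \<le> 1 \<Longrightarrow> (\<lambda>z. conj_dilation a m z ^ n) holomorphic_on ball 0 \<rho>"
    "\<And>m z. norm m \<le> 1 \<Longrightarrow> norm z = r \<Longrightarrow> norm (conj_dilation a m z ^ n - a ^ n) \<le> K * norm m"
    "\<And>m z. norm m \<le> 1 \<Longrightarrow> norm z = r \<Longrightarrow>
      norm (conj_dilation a m z ^ n - a ^ n - m * (of_nat n * a ^ (n - 1) * (a * cnj a - 1)) * disc_auto a z)
        \<le> K * (norm m)\<^sup>2"
proof -
  obtain \<rho> R s where \<rho>: "1 < \<rho>" "\<rho> \<le> R" "0 \<le> s" "s < R" "norm a * R \<le> 1"
    and s: "\<And>z. norm z < \<rho> \<Longrightarrow> norm (disc_auto a z) \<le> s"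
    using disc_auto_near_closed_disc[OF assms] by blast
  define F where "F = (\<lambda>u. disc_auto a u ^ n)"
  have hol_R: "disc_auto a holomorphic_on ball 0 R"
    using holomorphic_on_disc_auto[OF \<rho>(5)] .
  then have hol_F: "F holomorphic_on ball 0 R"
    unfolding F_def by (intro holomorphic_intros)
  have F0: "F 0 = a ^ n" "deriv F 0 = of_nat n * a ^ (n - 1) * (a * cnj a - 1)"
    unfolding F_def by (simp_all add: disc_auto_def deriv_disc_auto_power_0[unfolded disc_auto_def])
  obtain K where K:
    "\<And>m v. norm m \<le> 1 \<Longrightarrow> norm v \<le> s \<Longrightarrow> norm (F (m * v) - F 0) \<le> K * norm m"
    "\<And>m v. norm m \<le> 1 \<Longrightarrow> norm v \<le> s \<Longrightarrow>
      norm (F (m * v) - F 0 - deriv F 0 * (m * v)) \<le> K * (norm m)\<^sup>2"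
    using holomorphic_scaled_remainders[OF hol_F \<rho>(3,4)] by blast
  have power_eq: "conj_dilation a m z ^ n = F (m * disc_auto a z)" for m z
    by (simp add: F_def conj_dilation_def)
  define r where "r = (1 + \<rho>) / 2"
  have r: "1 < r" "r < \<rho>" using \<rho> by (auto simp: r_def)
  have hol_\<rho>: "disc_auto a holomorphic_on ball 0 \<rho>"
    using hol_R by (rule holomorphic_on_subset) (use \<rho>(2) in auto)
  show ?thesis
  proof (rule that[OF r hol_\<rho>])
    fix m :: complex assume m: "norm m \<le> 1"
    have "(F \<circ> (\<lambda>z. m * disc_auto a z)) holomorphic_on ball 0 \<rho>"
    proof (rule holomorphic_on_compose_gen[OF _ hol_F])
      show "(\<lambda>z. m * disc_auto a z) holomorphic_on ball 0 \<rho>"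
        using hol_\<rho> by (intro holomorphic_intros)
      have "norm (m * disc_auto a z) \<le> s" if "norm z < \<rho>" for z
        using s[OF that] m \<rho>(3) mult_mono[of "norm m" 1 "norm (disc_auto a z)" s]
        by (simp add: norm_mult)
      then show "(\<lambda>z. m * disc_auto a z) ` ball 0 \<rho> \<subseteq> ball 0 R"
        using \<rho>(4) by fastforce
    qed
    then show "(\<lambda>z. conj_dilation a m z ^ n) holomorphic_on ball 0 \<rho>"
      by (simp add: o_def power_eq)
    fix z :: complex assume "norm z = r"
    then have z: "norm (disc_auto a z) \<le> s" using s r by simp
    show "norm (conj_dilation a m z ^ n - a ^ n) \<le> K * norm m"
      using K(1)[OF m z] by (simp add: power_eq F0)
    show "norm (conj_dilation a m z ^ n - a ^ n - m * (of_nat n * a ^ (n - 1) * (a * cnj a - 1)) * disc_auto a z)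
        \<le> K * (norm m)\<^sup>2"
      using K(2)[OF m z] by (simp add: power_eq F0 mult_ac)
  qed
qed

lemma comp_op_conj_dilation_disc_restrict:
  assumes "norm a < 1" "norm m \<le> 1"
  shows "comp_op (conj_dilation a m) (disc_restrict g) = disc_restrict (\<lambda>z. g (conj_dilation a m z))"
  using conj_dilation_in_ball[OF assms] by (auto simp: comp_op_def disc_restrict_def)

section \<open>Weighted Bergman spaces\<close>

locale weighted_bergman =
  fixes \<beta> :: real
  assumes beta_gt: "-1 < \<beta>"
begin

lemma bergman_weight_pos: "0 < bergman_weight \<beta> n"
  using beta_gt by (simp add: bergman_weight_def)

lemma bergman_weight_0 [simp]: "bergman_weight \<beta> 0 = 1"
proof -
  have "Gamma (2 + \<beta>) > 0" using beta_gt by simp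
  then show ?thesis by (simp add: bergman_weight_def)
qed

lemma bergman_weight_Suc:
  "bergman_weight \<beta> (Suc n) = bergman_weight \<beta> n * (real n + 1) / (real n + 2 + \<beta>)"
proof -
  have pos: "real n + 2 + \<beta> > 0" using beta_gt by simp
  then have "Gamma (real (Suc n) + 2 + \<beta>) = (real n + 2 + \<beta>) * Gamma (real n + 2 + \<beta>)"
    using Gamma_plus1[of "real n + 2 + \<beta>"] by (simp add: add_ac nonpos_Ints_def)
  then show ?thesis
    using pos by (simp add: bergman_weight_def field_simps)
qed

lemma bergman_weight_1: "bergman_weight \<beta> 1 = 1 / (\<beta> + 2)"
  using bergman_weight_Suc[of 0] by (simp add: add.commute)

lemma decseq_bergman_weight: "decseq (bergman_weight \<beta>)"
proof (rule decseq_SucI)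
  fix n
  have "bergman_weight \<beta> n * ((real n + 1) / (real n + 2 + \<beta>)) \<le> bergman_weight \<beta> n"
    using bergman_weight_pos[of n] beta_gt by (intro mult_left_le) auto
  then show "bergman_weight \<beta> (Suc n) \<le> bergman_weight \<beta> n"
    by (simp add: bergman_weight_Suc)
qed

lemma bergman_weight_le_1: "bergman_weight \<beta> n \<le> 1"
  using decseqD[OF decseq_bergman_weight, of 0 n] by simp

lemma bergman_weight_Suc_le: "bergman_weight \<beta> (Suc n) \<le> 1 / (\<beta> + 2)"
  using decseqD[OF decseq_bergman_weight, of 1 "Suc n"] bergman_weight_1 by simp

lemma bergman_weight_Suc_ratio:
  "real (Suc n) / bergman_weight \<beta> (Suc n) = (real n + 2 + \<beta>) / bergman_weight \<beta> n"
proof -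
  have "0 < real n + 2 + \<beta>" using beta_gt by simp
  then have "bergman_weight \<beta> (Suc n) * (real n + 2 + \<beta>) = bergman_weight \<beta> n * (real n + 1)"
    by (simp add: bergman_weight_Suc)
  then show ?thesis
    using bergman_weight_pos[of n] bergman_weight_pos[of "Suc n"] by (simp add: frac_eq_eq algebra_simps)
qed

lemma disc_restrict_in_A2:
  assumes hol: "g holomorphic_on ball 0 \<rho>" and "1 < \<rho>"
  shows "disc_restrict g \<in> A2 \<beta>"
proof -
  define r where "r = (1 + \<rho>) / 2"
  have r: "1 < r" "r < \<rho>" using assms(2) by (auto simp: r_def)
  obtain B where B: "\<And>z. norm z = r \<Longrightarrow> norm (g z) \<le> B"
    using holomorphic_bounded_on_sphere[OF hol r(2)] by blast
  have bound: "bergman_weight \<beta> n * (norm (taylor_coeff (disc_restrict g) n))\<^sup>2 \<le> B\<^sup>2 * (1 / r\<^sup>2) ^ n" for n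
  proof -
    have "(norm (taylor_coeff g n))\<^sup>2 \<le> (B / r ^ n)\<^sup>2"
      using norm_taylor_coeff_le[OF hol _ r(2) B] r(1) by (intro power_mono) auto
    also have "\<dots> = B\<^sup>2 * (1 / r\<^sup>2) ^ n"
      by (simp add: power_divide power_one_over flip: power_mult) (simp add: mult.commute)
    finally have "(norm (taylor_coeff g n))\<^sup>2 \<le> B\<^sup>2 * (1 / r\<^sup>2) ^ n" .
    moreover have "bergman_weight \<beta> n * (norm (taylor_coeff g n))\<^sup>2 \<le> (norm (taylor_coeff g n))\<^sup>2"
      using bergman_weight_pos[of n] bergman_weight_le_1[of n] by (intro mult_left_le_one_le) auto
    ultimately show ?thesis by simp
  qed
  have "summable (\<lambda>n. B\<^sup>2 * (1 / r\<^sup>2) ^ n)"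
    using r by (intro summable_mult summable_geometric) auto
  then have "summable (\<lambda>n. bergman_weight \<beta> n * (norm (taylor_coeff (disc_restrict g) n))\<^sup>2)"
    by (rule summable_comparison_test'[where N = 0])
      (use bound bergman_weight_pos in \<open>simp add: abs_mult less_imp_le\<close>)
  moreover have "disc_restrict g holomorphic_on ball 0 1"
    using r by (intro holomorphic_on_disc_restrict holomorphic_on_subset[OF hol]) auto
  ultimately show ?thesis
    by (simp add: A2_def disc_restrict_def)
qed

lemma disc_restrict_disc_auto_in_A2:
  assumes "norm a < 1"
  shows "disc_restrict (disc_auto a) \<in> A2 \<beta>"
proof (cases "a = 0")
  case True
  then show ?thesis
    by (intro disc_restrict_in_A2[of _ 2] holomorphic_on_disc_auto) simp_all
next
  case False
  then show ?thesis
    using assms by (intro disc_restrict_in_A2[of _ "1 / norm a"] holomorphic_on_disc_auto) simp_all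
qed

lemma summable_norm_A2_inner:
  assumes "f \<in> A2 \<beta>" "g \<in> A2 \<beta>"
  shows "summable (\<lambda>n. norm (of_real (bergman_weight \<beta> n) * taylor_coeff f n * cnj (taylor_coeff g n)))"
proof (rule summable_comparison_test'[where N = 0])
  let ?F = "\<lambda>n. bergman_weight \<beta> n * (norm (taylor_coeff f n))\<^sup>2"
  let ?G = "\<lambda>n. bergman_weight \<beta> n * (norm (taylor_coeff g n))\<^sup>2"
  show "summable (\<lambda>n. ?F n / 2 + ?G n / 2)"
    using assms by (intro summable_add summable_divide) (simp_all add: A2_def)
  fix n
  have "2 * norm (taylor_coeff f n) * norm (taylor_coeff g n)
      \<le> (norm (taylor_coeff f n))\<^sup>2 + (norm (taylor_coeff g n))\<^sup>2"
    by (rule sum_squares_bound)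
  then have "bergman_weight \<beta> n * (norm (taylor_coeff f n) * norm (taylor_coeff g n))
      \<le> bergman_weight \<beta> n * (((norm (taylor_coeff f n))\<^sup>2 + (norm (taylor_coeff g n))\<^sup>2) / 2)"
    using bergman_weight_pos[of n] by (intro mult_left_mono) auto
  also have "\<dots> = ?F n / 2 + ?G n / 2"
    by (simp add: field_simps)
  finally show "norm (norm (of_real (bergman_weight \<beta> n) * taylor_coeff f n * cnj (taylor_coeff g n)))
      \<le> ?F n / 2 + ?G n / 2"
    using bergman_weight_pos[of n] by (simp add: norm_mult mult.assoc)
qed

lemma A2_inner_sums:
  assumes "f \<in> A2 \<beta>" "g \<in> A2 \<beta>"
  shows "(\<lambda>n. of_real (bergman_weight \<beta> n) * taylor_coeff f n * cnj (taylor_coeff g n)) sums A2_inner \<beta> f g"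
  unfolding A2_inner_def
  by (rule summable_sums[OF summable_norm_cancel[OF summable_norm_A2_inner[OF assms]]])

lemma A2_inner_linear_left:
  assumes "f \<in> A2 \<beta>" "g \<in> A2 \<beta>" "w \<in> A2 \<beta>"
    and "\<And>n. taylor_coeff h n = c * taylor_coeff f n + d * taylor_coeff g n"
  shows "A2_inner \<beta> h w = c * A2_inner \<beta> f w + d * A2_inner \<beta> g w"
proof -
  have "(\<lambda>n. c * (of_real (bergman_weight \<beta> n) * taylor_coeff f n * cnj (taylor_coeff w n))
      + d * (of_real (bergman_weight \<beta> n) * taylor_coeff g n * cnj (taylor_coeff w n)))
      sums (c * A2_inner \<beta> f w + d * A2_inner \<beta> g w)"
    by (intro sums_add sums_mult A2_inner_sums assms)
  then show ?thesis
    unfolding A2_inner_def assms(4) by (simp add: sums_iff algebra_simps)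
qed

lemma A2_inner_scale_right:
  assumes "f \<in> A2 \<beta>" "w \<in> A2 \<beta>"
  shows "A2_inner \<beta> f (\<lambda>z. c * w z) = cnj c * A2_inner \<beta> f w"
proof -
  have "taylor_coeff (\<lambda>z. c * w z) n = c * taylor_coeff w n" for n
    using taylor_coeff_linear[where f = w and g = w and A = "ball 0 1" and c = c and d = 0] assms(2)
    by (simp add: A2_def)
  then have "(\<lambda>n. of_real (bergman_weight \<beta> n) * taylor_coeff f n * cnj (taylor_coeff (\<lambda>z. c * w z) n))
      = (\<lambda>n. cnj c * (of_real (bergman_weight \<beta> n) * taylor_coeff f n * cnj (taylor_coeff w n)))"
    by (simp add: mult_ac)
  moreover have "(\<lambda>n. cnj c * (of_real (bergman_weight \<beta> n) * taylor_coeff f n * cnj (taylor_coeff w n)))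
      sums (cnj c * A2_inner \<beta> f w)"
    by (intro sums_mult A2_inner_sums assms)
  ultimately show ?thesis
    by (simp add: A2_inner_def sums_iff)
qed

lemma A2_inner_disc_restrict_diff:
  assumes "g holomorphic_on ball 0 \<rho>" "h holomorphic_on ball 0 \<rho>" "1 < \<rho>" "w \<in> A2 \<beta>"
  shows "A2_inner \<beta> (disc_restrict (\<lambda>z. g z - c * h z)) w
    = A2_inner \<beta> (disc_restrict g) w - c * A2_inner \<beta> (disc_restrict h) w"
proof -
  have "taylor_coeff (disc_restrict (\<lambda>z. g z - c * h z)) n
      = 1 * taylor_coeff (disc_restrict g) n + (- c) * taylor_coeff (disc_restrict h) n" for n
    using taylor_coeff_linear[OF assms(1,2) open_ball, of 1 "- c" n] assms(3) by simp
  from A2_inner_linear_left[OF disc_restrict_in_A2[OF assms(1,3)] disc_restrict_in_A2[OF assms(2,3)] assms(4) this]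
  show ?thesis by simp
qed

lemma A2_inner_monomial_left:
  "A2_inner \<beta> (disc_restrict (\<lambda>z. z ^ k)) f = of_real (bergman_weight \<beta> k) * cnj (taylor_coeff f k)"
proof -
  have "(\<lambda>n. of_real (bergman_weight \<beta> n) * taylor_coeff (disc_restrict (\<lambda>z. z ^ k)) n * cnj (taylor_coeff f n))
      = (\<lambda>n. if n = k then of_real (bergman_weight \<beta> n) * cnj (taylor_coeff f n) else 0)"
    by (auto simp: taylor_coeff_power)
  then show ?thesis
    unfolding A2_inner_def
    using sums_single[of k "\<lambda>n. of_real (bergman_weight \<beta> n) * cnj (taylor_coeff f n)"]
    by (simp add: sums_iff)
qed

lemma A2_inner_monomial_right:
  "A2_inner \<beta> f (disc_restrict (\<lambda>z. z ^ k)) = of_real (bergman_weight \<beta> k) * taylor_coeff f k"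
proof -
  have "(\<lambda>n. of_real (bergman_weight \<beta> n) * taylor_coeff f n * cnj (taylor_coeff (disc_restrict (\<lambda>z. z ^ k)) n))
      = (\<lambda>n. if n = k then of_real (bergman_weight \<beta> n) * taylor_coeff f n else 0)"
    by (auto simp: taylor_coeff_power)
  then show ?thesis
    unfolding A2_inner_def
    using sums_single[of k "\<lambda>n. of_real (bergman_weight \<beta> n) * taylor_coeff f n"]
    by (simp add: sums_iff)
qed

text \<open>Parseval's identity for the orthogonal basis of monomials, whose norms are
  \<open>\<langle>z^n, z^n\<rangle> = bergman_weight \<beta> n\<close>.\<close>
lemma A2_inner_sums_monomials:
  assumes "f \<in> A2 \<beta>" "g \<in> A2 \<beta>"
  shows "(\<lambda>n. cnj (A2_inner \<beta> (disc_restrict (\<lambda>z. z ^ n)) f) * A2_inner \<beta> (disc_restrict (\<lambda>z. z ^ n)) g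
      / of_real (bergman_weight \<beta> n)) sums A2_inner \<beta> f g"
proof -
  have "bergman_weight \<beta> n \<noteq> 0" for n
    using bergman_weight_pos[of n] by simp
  then show ?thesis
    using A2_inner_sums[OF assms] by (simp add: A2_inner_monomial_left mult_ac)
qed

lemma summable_A2_coeff_geometric:
  assumes w: "w \<in> A2 \<beta>" and "1 < r"
  shows "summable (\<lambda>n. bergman_weight \<beta> n * (norm (taylor_coeff w n) * (1 / r ^ n)))"
proof (rule summable_comparison_test'[where N = 0])
  show "summable (\<lambda>n. bergman_weight \<beta> n * (norm (taylor_coeff w n))\<^sup>2 / 2 + (1 / r\<^sup>2) ^ n / 2)"
    using assms by (intro summable_add summable_divide summable_geometric) (auto simp: A2_def)
  fix n
  have wn: "0 < bergman_weight \<beta> n" "bergman_weight \<beta> n \<le> 1"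
    using bergman_weight_pos bergman_weight_le_1 by auto
  have "norm (taylor_coeff w n) * (1 / r ^ n) \<le> ((norm (taylor_coeff w n))\<^sup>2 + (1 / r ^ n)\<^sup>2) / 2"
    using sum_squares_bound[of "norm (taylor_coeff w n)" "1 / r ^ n"] by (simp add: divide_simps mult_ac)
  moreover have "(1 / r ^ n)\<^sup>2 = (1 / r\<^sup>2) ^ n"
    by (simp add: power_one_over flip: power_mult) (simp add: mult.commute)
  ultimately have "bergman_weight \<beta> n * (norm (taylor_coeff w n) * (1 / r ^ n))
      \<le> bergman_weight \<beta> n * (((norm (taylor_coeff w n))\<^sup>2 + (1 / r\<^sup>2) ^ n) / 2)"
    using wn by (intro mult_left_mono) auto
  also have "\<dots> \<le> bergman_weight \<beta> n * (norm (taylor_coeff w n))\<^sup>2 / 2 + (1 / r\<^sup>2) ^ n / 2"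
    using mult_left_le_one_le[of "(1 / r\<^sup>2) ^ n" "bergman_weight \<beta> n"] wn
    by (simp add: ring_distribs add_divide_distrib)
  finally show "norm (bergman_weight \<beta> n * (norm (taylor_coeff w n) * (1 / r ^ n)))
      \<le> bergman_weight \<beta> n * (norm (taylor_coeff w n))\<^sup>2 / 2 + (1 / r\<^sup>2) ^ n / 2"
    using wn assms(2) by simp
qed

text \<open>By the Cauchy estimates, the Taylor coefficients of \<open>g\<close> decay like \<open>B / r\<^sup>n\<close>.\<close>
lemma A2_inner_disc_restrict_le:
  assumes w: "w \<in> A2 \<beta>" and "1 < r"
  obtains K where "\<And>g \<rho> B. g holomorphic_on ball 0 \<rho> \<Longrightarrow> r < \<rho> \<Longrightarrow> (\<And>z. norm z = r \<Longrightarrow> norm (g z) \<le> B)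
    \<Longrightarrow> norm (A2_inner \<beta> (disc_restrict g) w) \<le> B * K"
proof
  define c where "c n = bergman_weight \<beta> n * (norm (taylor_coeff w n) * (1 / r ^ n))" for n
  fix g \<rho> B
  assume hol: "g holomorphic_on ball 0 \<rho>" and "r < \<rho>" and B: "\<And>z. norm z = r \<Longrightarrow> norm (g z) \<le> B"
  show "norm (A2_inner \<beta> (disc_restrict g) w) \<le> B * suminf c"
  proof (rule norm_sums_le[OF A2_inner_sums])
    show "disc_restrict g \<in> A2 \<beta>"
      using disc_restrict_in_A2[OF hol] \<open>r < \<rho>\<close> assms(2) by simp
    show "(\<lambda>n. B * c n) sums (B * suminf c)"
      unfolding c_def by (intro sums_mult summable_sums summable_A2_coeff_geometric assms)
    fix n
    have "norm (taylor_coeff g n) \<le> B / r ^ n"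
      using norm_taylor_coeff_le[OF hol _ \<open>r < \<rho>\<close> B] assms(2) by simp
    then have "bergman_weight \<beta> n * norm (taylor_coeff g n) * norm (taylor_coeff w n)
        \<le> bergman_weight \<beta> n * (B / r ^ n) * norm (taylor_coeff w n)"
      using bergman_weight_pos[of n] by (intro mult_right_mono mult_left_mono) auto
    then show "norm (of_real (bergman_weight \<beta> n) * taylor_coeff (disc_restrict g) n * cnj (taylor_coeff w n))
        \<le> B * c n"
      using bergman_weight_pos[of n] by (simp add: c_def norm_mult mult_ac)
  qed (use w in simp)
qed

lemma A2_inner_disc_auto_self:
  assumes "0 < norm a" "norm a < 1"
  obtains N where "A2_inner \<beta> (disc_restrict (disc_auto a)) (disc_restrict (disc_auto a)) = of_real N"
    "(norm a)\<^sup>2 \<le> N" "N < (norm a)\<^sup>2 + 1 / (\<beta> + 2)"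
proof -
  define X where "X = A2_inner \<beta> (disc_restrict (disc_auto a)) (disc_restrict (disc_auto a))"
  define t where "t = (norm a)\<^sup>2"
  have t: "0 < t" "t < 1"
    using assms by (auto simp: t_def power_less_one_iff abs_square_less_1)
  define c where "c n = bergman_weight \<beta> n * (norm (taylor_coeff (disc_auto a) n))\<^sup>2" for n
  have "(\<lambda>n. complex_of_real (c n)) sums X"
    using A2_inner_sums[OF disc_restrict_disc_auto_in_A2[OF assms(2)] disc_restrict_disc_auto_in_A2[OF assms(2)]]
    by (simp add: X_def c_def mult.assoc flip: complex_norm_square)
  then have sums_c: "c sums Re X" and real: "X = of_real (Re X)"
    by (simp_all add: sums_complex_of_real_iff complex_eq_iff)
  have a_cnj_a: "a * cnj a - 1 = of_real (t - 1)"
    by (simp add: t_def flip: complex_norm_square)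
  have "norm (a * cnj a - 1) = 1 - t"
    unfolding a_cnj_a norm_of_real using t by simp
  then have c_Suc: "c (Suc m) = bergman_weight \<beta> (Suc m) * ((1 - t)\<^sup>2 * t ^ m)" for m
    using assms(2) by (simp add: c_def taylor_coeff_disc_auto norm_mult norm_power t_def
        power_mult_distrib flip: power_mult) (simp add: mult.commute)
  have tail: "(\<lambda>m. c (Suc m)) sums (Re X - t)"
    using sums_c assms(2) by (subst sums_Suc_iff) (simp add: c_def taylor_coeff_disc_auto t_def)
  have "0 \<le> Re X - t"
    by (rule sums_le[OF _ sums_zero tail])
      (use bergman_weight_pos t in \<open>simp add: c_Suc less_imp_le\<close>)
  moreover have "Re X - t \<le> (1 - t) / (\<beta> + 2)"
  proof (rule sums_le[OF _ tail])
    show "(\<lambda>m. 1 / (\<beta> + 2) * ((1 - t)\<^sup>2 * t ^ m)) sums ((1 - t) / (\<beta> + 2))"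
      using sums_mult[OF sums_mult[OF geometric_sums[of t]], of "(1 - t)\<^sup>2" "1 / (\<beta> + 2)"] t
      by (simp add: power2_eq_square)
    show "c (Suc m) \<le> 1 / (\<beta> + 2) * ((1 - t)\<^sup>2 * t ^ m)" for m
      unfolding c_Suc using bergman_weight_Suc_le[of m] t by (intro mult_right_mono) auto
  qed
  moreover have "(1 - t) / (\<beta> + 2) < 1 / (\<beta> + 2)"
    using t beta_gt by (simp add: divide_strict_right_mono)
  ultimately show ?thesis
    using real by (intro that[of "Re X"]) (simp_all add: X_def t_def)
qed

text \<open>Both relations come from shifting the index by one and using \<open>bergman_weight_Suc_ratio\<close>.\<close>
lemma bergman_weight_series_relations:
  fixes t :: real
  assumes P: "(\<lambda>n. t ^ n / bergman_weight \<beta> n) sums P"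
    and Q: "(\<lambda>n. real n * t ^ (n - 1) / bergman_weight \<beta> n) sums Q"
    and R: "(\<lambda>n. (real n)\<^sup>2 * t ^ (n - 1) / bergman_weight \<beta> n) sums R"
  shows "(1 - t) * Q = (\<beta> + 2) * P" "(1 - t) * R = (1 + (\<beta> + 2) * t) * Q"
proof -
  define p where "p = (\<lambda>n. t ^ n / bergman_weight \<beta> n)"
  have shift: "real m * p m = t * (real m * t ^ (m - 1) / bergman_weight \<beta> m)"
    "(real m)\<^sup>2 * p m = t * ((real m)\<^sup>2 * t ^ (m - 1) / bergman_weight \<beta> m)" for m
    by (cases m; simp add: p_def)+
  have Q_Suc: "real (Suc m) * t ^ (Suc m - 1) / bergman_weight \<beta> (Suc m)
      = t * (real m * t ^ (m - 1) / bergman_weight \<beta> m) + (\<beta> + 2) * p m" for m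
  proof -
    have "real (Suc m) * t ^ (Suc m - 1) / bergman_weight \<beta> (Suc m)
        = t ^ m * ((real m + 2 + \<beta>) / bergman_weight \<beta> m)"
      unfolding bergman_weight_Suc_ratio[symmetric] by simp
    also have "\<dots> = real m * p m + (\<beta> + 2) * p m"
      by (simp add: p_def add_divide_distrib algebra_simps)
    finally show ?thesis
      by (simp only: shift(1))
  qed
  have "Q = t * Q + (\<beta> + 2) * P"
    by (rule sums_Suc_unique[OF Q]) (simp, unfold Q_Suc, intro sums_add sums_mult P[folded p_def] Q)
  then show "(1 - t) * Q = (\<beta> + 2) * P"
    by (simp add: algebra_simps)
  have R_Suc: "(real (Suc m))\<^sup>2 * t ^ (Suc m - 1) / bergman_weight \<beta> (Suc m)
      = t * ((real m)\<^sup>2 * t ^ (m - 1) / bergman_weight \<beta> m)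
        + (\<beta> + 3) * (t * (real m * t ^ (m - 1) / bergman_weight \<beta> m)) + (\<beta> + 2) * p m" for m
  proof -
    have "(real (Suc m))\<^sup>2 * t ^ (Suc m - 1) / bergman_weight \<beta> (Suc m)
        = real (Suc m) * t ^ m * ((real m + 2 + \<beta>) / bergman_weight \<beta> m)"
      unfolding bergman_weight_Suc_ratio[symmetric] by (simp add: power2_eq_square)
    also have "\<dots> = (real m)\<^sup>2 * p m + (\<beta> + 3) * (real m * p m) + (\<beta> + 2) * p m"
      by (simp add: p_def power2_eq_square add_divide_distrib algebra_simps)
    finally show ?thesis
      by (simp only: shift)
  qed
  have "R = t * R + (\<beta> + 3) * (t * Q) + (\<beta> + 2) * P"
    by (rule sums_Suc_unique[OF R]) (simp, unfold R_Suc, intro sums_add sums_mult P[folded p_def] Q R)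
  with \<open>Q = t * Q + (\<beta> + 2) * P\<close> show "(1 - t) * R = (1 + (\<beta> + 2) * t) * Q"
    by (simp add: algebra_simps)
qed

lemma bergman_weight_series_product:
  assumes "t < 1"
    and P: "(\<lambda>n. t ^ n / bergman_weight \<beta> n) sums P"
    and Q: "(\<lambda>n. real n * t ^ (n - 1) / bergman_weight \<beta> n) sums Q"
    and R: "(\<lambda>n. (real n)\<^sup>2 * t ^ (n - 1) / bergman_weight \<beta> n) sums R"
  shows "P * R = (t + 1 / (\<beta> + 2)) * Q\<^sup>2"
proof -
  define s where "s = \<beta> + 2"
  have rel: "(1 - t) * Q = s * P" "(1 - t) * R = (1 + s * t) * Q"
    using bergman_weight_series_relations[OF P Q R] by (simp_all add: s_def)
  have "(1 - t) * (P * R * s) = ((1 - t) * R) * (s * P)"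
    by (simp add: mult_ac)
  also have "\<dots> = ((1 + s * t) * Q) * ((1 - t) * Q)"
    by (simp only: rel)
  also have "\<dots> = (1 - t) * ((1 + s * t) * Q\<^sup>2)"
    by (simp add: power2_eq_square mult_ac)
  finally have "P * R * s = (1 + s * t) * Q\<^sup>2"
    using \<open>t < 1\<close> by simp
  moreover have "0 < s" using beta_gt by (simp add: s_def)
  ultimately show ?thesis
    by (simp add: s_def field_simps)
qed

section \<open>Adjoint eigenvectors of the composition operator\<close>

lemma A2_inner_conj_dilation_power_iterate:
  assumes a: "norm a < 1" and l: "norm l \<le> 1" and w: "w \<in> A2 \<beta>"
    and eigen: "\<And>f. f \<in> A2 \<beta> \<Longrightarrow> A2_inner \<beta> (comp_op (conj_dilation a l) f) w = \<mu> * A2_inner \<beta> f w"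
    and mem: "\<And>m. norm m \<le> 1 \<Longrightarrow> disc_restrict (\<lambda>z. conj_dilation a m z ^ n) \<in> A2 \<beta>"
  shows "A2_inner \<beta> (disc_restrict (\<lambda>z. conj_dilation a (l ^ k) z ^ n)) w
    = \<mu> ^ k * A2_inner \<beta> (disc_restrict (\<lambda>z. z ^ n)) w"
proof (induction k)
  case 0
  have "disc_restrict (\<lambda>z. conj_dilation a 1 z ^ n) = disc_restrict (\<lambda>z. z ^ n)"
    using conj_dilation_1[OF a] by (auto simp: disc_restrict_def)
  then show ?case by simp
next
  case (Suc k)
  have lk: "norm (l ^ k) \<le> 1"
    using l by (simp add: norm_power power_le_one)
  have "disc_restrict (\<lambda>z. conj_dilation a (l ^ Suc k) z ^ n)
      = comp_op (conj_dilation a l) (disc_restrict (\<lambda>z. conj_dilation a (l ^ k) z ^ n))"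
    unfolding comp_op_conj_dilation_disc_restrict[OF a l]
    using conj_dilation_conj_dilation[OF a l] by (auto simp: disc_restrict_def mult.commute)
  then show ?case
    using eigen[OF mem[OF lk]] Suc.IH by simp
qed

lemma A2_inner_conj_dilation_power_estimates:
  assumes a: "norm a < 1" and w: "w \<in> A2 \<beta>"
  obtains K where "\<And>m. norm m \<le> 1 \<Longrightarrow> disc_restrict (\<lambda>z. conj_dilation a m z ^ n) \<in> A2 \<beta>"
    "\<And>m. norm m \<le> 1 \<Longrightarrow> norm (A2_inner \<beta> (disc_restrict (\<lambda>z. conj_dilation a m z ^ n)) w
        - a ^ n * A2_inner \<beta> (disc_restrict (\<lambda>z. 1)) w) \<le> K * norm m"
    "\<And>m. norm m \<le> 1 \<Longrightarrow> norm (A2_inner \<beta> (disc_restrict (\<lambda>z. conj_dilation a m z ^ n)) w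
        - a ^ n * A2_inner \<beta> (disc_restrict (\<lambda>z. 1)) w
        - m * (of_nat n * a ^ (n - 1) * (a * cnj a - 1)) * A2_inner \<beta> (disc_restrict (disc_auto a)) w)
      \<le> K * (norm m)\<^sup>2"
proof -
  obtain \<rho> r K where r: "1 < r" "r < \<rho>" and hol_\<psi>: "disc_auto a holomorphic_on ball 0 \<rho>"
    and hol: "\<And>m. norm m \<le> 1 \<Longrightarrow> (\<lambda>z. conj_dilation a m z ^ n) holomorphic_on ball 0 \<rho>"
    and est1: "\<And>m z. norm m \<le> 1 \<Longrightarrow> norm z = r \<Longrightarrow> norm (conj_dilation a m z ^ n - a ^ n) \<le> K * norm m"
    and est2: "\<And>m z. norm m \<le> 1 \<Longrightarrow> norm z = r \<Longrightarrow>
      norm (conj_dilation a m z ^ n - a ^ n - m * (of_nat n * a ^ (n - 1) * (a * cnj a - 1)) * disc_auto a z)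
        \<le> K * (norm m)\<^sup>2"
    using conj_dilation_power_expansion[OF a, of n] by metis
  obtain Kw where Kw: "\<And>g \<rho> B. g holomorphic_on ball 0 \<rho> \<Longrightarrow> r < \<rho> \<Longrightarrow> (\<And>z. norm z = r \<Longrightarrow> norm (g z) \<le> B)
      \<Longrightarrow> norm (A2_inner \<beta> (disc_restrict g) w) \<le> B * Kw"
    using A2_inner_disc_restrict_le[OF w r(1)] by blast
  have \<rho>: "1 < \<rho>" using r by simp
  show ?thesis
  proof
    fix m :: complex assume m: "norm m \<le> 1"
    show "disc_restrict (\<lambda>z. conj_dilation a m z ^ n) \<in> A2 \<beta>"
      by (rule disc_restrict_in_A2[OF hol[OF m] \<rho>])
    define g where "g z = conj_dilation a m z ^ n - a ^ n * 1" for z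
    have hol_g: "g holomorphic_on ball 0 \<rho>"
      unfolding g_def by (intro holomorphic_intros hol[OF m])
    have g_pairing: "A2_inner \<beta> (disc_restrict (\<lambda>z. conj_dilation a m z ^ n)) w
        - a ^ n * A2_inner \<beta> (disc_restrict (\<lambda>z. 1)) w = A2_inner \<beta> (disc_restrict g) w"
      unfolding g_def by (rule A2_inner_disc_restrict_diff[OF hol[OF m] holomorphic_on_const \<rho> w, symmetric])
    moreover have "norm (A2_inner \<beta> (disc_restrict g) w) \<le> (K * norm m) * Kw"
      by (rule Kw[OF hol_g r(2)]) (use est1[OF m] in \<open>simp add: g_def\<close>)
    ultimately show "norm (A2_inner \<beta> (disc_restrict (\<lambda>z. conj_dilation a m z ^ n)) w
        - a ^ n * A2_inner \<beta> (disc_restrict (\<lambda>z. 1)) w) \<le> K * Kw * norm m"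
      by (simp add: mult_ac)
    define c where "c = m * (of_nat n * a ^ (n - 1) * (a * cnj a - 1))"
    have "A2_inner \<beta> (disc_restrict g) w - c * A2_inner \<beta> (disc_restrict (disc_auto a)) w
        = A2_inner \<beta> (disc_restrict (\<lambda>z. g z - c * disc_auto a z)) w"
      by (rule A2_inner_disc_restrict_diff[OF hol_g hol_\<psi> \<rho> w, symmetric])
    moreover have "norm (A2_inner \<beta> (disc_restrict (\<lambda>z. g z - c * disc_auto a z)) w) \<le> (K * (norm m)\<^sup>2) * Kw"
    proof (rule Kw[OF _ r(2)])
      show "(\<lambda>z. g z - c * disc_auto a z) holomorphic_on ball 0 \<rho>"
        by (intro holomorphic_intros hol_g hol_\<psi>)
    qed (use est2[OF m] in \<open>simp add: g_def c_def mult.assoc\<close>)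
    ultimately show "norm (A2_inner \<beta> (disc_restrict (\<lambda>z. conj_dilation a m z ^ n)) w
        - a ^ n * A2_inner \<beta> (disc_restrict (\<lambda>z. 1)) w
        - m * (of_nat n * a ^ (n - 1) * (a * cnj a - 1)) * A2_inner \<beta> (disc_restrict (disc_auto a)) w)
      \<le> K * Kw * (norm m)\<^sup>2"
      using g_pairing by (simp add: c_def mult_ac)
  qed
qed

text \<open>Pairing a fixed point \<open>w\<close> of the adjoint with \<open>z^n\<close> is the same as pairing it with the
  \<open>n\<close>-th power of the \<open>k\<close>-th iterate \<open>conj_dilation a (l^k)\<close>, which tends to \<open>a^n\<close> geometrically.\<close>
lemma A2_inner_monomial_if_adjoint_fixed:
  assumes a: "norm a < 1" and l: "norm l < 1" and w: "w \<in> A2 \<beta>"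
    and fixed: "\<And>f. f \<in> A2 \<beta> \<Longrightarrow> A2_inner \<beta> (comp_op (conj_dilation a l) f) w = A2_inner \<beta> f w"
  shows "A2_inner \<beta> (disc_restrict (\<lambda>z. z ^ n)) w = a ^ n * A2_inner \<beta> (disc_restrict (\<lambda>z. 1)) w"
proof -
  obtain K where mem: "\<And>m. norm m \<le> 1 \<Longrightarrow> disc_restrict (\<lambda>z. conj_dilation a m z ^ n) \<in> A2 \<beta>"
    and est: "\<And>m. norm m \<le> 1 \<Longrightarrow> norm (A2_inner \<beta> (disc_restrict (\<lambda>z. conj_dilation a m z ^ n)) w
        - a ^ n * A2_inner \<beta> (disc_restrict (\<lambda>z. 1)) w) \<le> K * norm m"
    using A2_inner_conj_dilation_power_estimates[OF a w, of n] by metis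
  have "A2_inner \<beta> (comp_op (conj_dilation a l) f) w = 1 * A2_inner \<beta> f w" if "f \<in> A2 \<beta>" for f
    using fixed[OF that] by simp
  note iterate = A2_inner_conj_dilation_power_iterate[OF a less_imp_le[OF l] w this mem]
  define X where "X = A2_inner \<beta> (disc_restrict (\<lambda>z. z ^ n)) w - a ^ n * A2_inner \<beta> (disc_restrict (\<lambda>z. 1)) w"
  have lk: "norm (l ^ k) \<le> 1" for k
    using l by (simp add: norm_power power_le_one)
  have "norm X \<le> K * norm l ^ k" for k
    using est[OF lk[of k]] iterate[of k] by (simp add: X_def norm_power)
  then have "X = 0"
    using l by (intro norm_le_geometric_imp_eq_0[of "norm l"]) auto
  then show ?thesis by (simp add: X_def)
qed

text \<open>For an eigenvector of the adjoint with eigenvalue \<open>cnj l\<close>, the constant term \<open>a^n\<close> of the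
  expansion pairs to zero, and the first-order term, proportional to \<open>l\<^sup>k\<close>, survives.\<close>
lemma A2_inner_monomial_if_adjoint_eigen:
  assumes a: "norm a < 1" and l: "norm l < 1" "l \<noteq> 0" and w: "w \<in> A2 \<beta>"
    and eigen: "\<And>f. f \<in> A2 \<beta> \<Longrightarrow> A2_inner \<beta> (comp_op (conj_dilation a l) f) w = l * A2_inner \<beta> f w"
  shows "A2_inner \<beta> (disc_restrict (\<lambda>z. z ^ n)) w
    = of_nat n * a ^ (n - 1) * (a * cnj a - 1) * A2_inner \<beta> (disc_restrict (disc_auto a)) w"
proof -
  obtain K where mem: "\<And>m. norm m \<le> 1 \<Longrightarrow> disc_restrict (\<lambda>z. conj_dilation a m z ^ n) \<in> A2 \<beta>"
    and est: "\<And>m. norm m \<le> 1 \<Longrightarrow> norm (A2_inner \<beta> (disc_restrict (\<lambda>z. conj_dilation a m z ^ n)) w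
        - a ^ n * A2_inner \<beta> (disc_restrict (\<lambda>z. 1)) w
        - m * (of_nat n * a ^ (n - 1) * (a * cnj a - 1)) * A2_inner \<beta> (disc_restrict (disc_auto a)) w)
      \<le> K * (norm m)\<^sup>2"
    using A2_inner_conj_dilation_power_estimates[OF a w, of n] by metis
  have "A2_inner \<beta> (disc_restrict (\<lambda>z. 1)) w = l * A2_inner \<beta> (disc_restrict (\<lambda>z. 1)) w"
    using eigen[OF disc_restrict_in_A2[OF holomorphic_on_const, of 2]]
    by (simp add: comp_op_conj_dilation_disc_restrict[OF a less_imp_le[OF l(1)]])
  moreover have "l \<noteq> 1" using l by auto
  ultimately have const: "A2_inner \<beta> (disc_restrict (\<lambda>z. 1)) w = 0"
    by (metis mult_cancel_right2)
  define X where "X = A2_inner \<beta> (disc_restrict (\<lambda>z. z ^ n)) w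
    - of_nat n * a ^ (n - 1) * (a * cnj a - 1) * A2_inner \<beta> (disc_restrict (disc_auto a)) w"
  have lk: "norm (l ^ k) \<le> 1" for k
    using l by (simp add: norm_power power_le_one)
  have "norm (l ^ k * X) \<le> K * (norm (l ^ k))\<^sup>2" for k
    using est[OF lk[of k]] A2_inner_conj_dilation_power_iterate[OF a less_imp_le[OF l(1)] w eigen mem, of k]
    by (simp add: X_def const algebra_simps)
  then have "norm l ^ k * norm X \<le> norm l ^ k * (K * norm l ^ k)" for k
    by (simp add: norm_mult norm_power power2_eq_square mult_ac)
  then have "norm X \<le> K * norm l ^ k" for k
    using l(2) by simp
  then have "X = 0"
    using l by (intro norm_le_geometric_imp_eq_0[of "norm l"]) auto
  then show ?thesis by (simp add: X_def)
qed

lemma A2_gram_series: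
  assumes w0: "w0 \<in> A2 \<beta>" and w1: "w1 \<in> A2 \<beta>"
    and x0: "\<And>n. A2_inner \<beta> (disc_restrict (\<lambda>z. z ^ n)) w0 = a ^ n * \<kappa>"
    and x1: "\<And>n. A2_inner \<beta> (disc_restrict (\<lambda>z. z ^ n)) w1 = of_nat n * a ^ (n - 1) * \<nu>"
  defines "t \<equiv> (norm a)\<^sup>2"
  shows "(\<lambda>n. complex_of_real ((norm \<kappa>)\<^sup>2 * (t ^ n / bergman_weight \<beta> n))) sums A2_inner \<beta> w0 w0"
    and "(\<lambda>n. complex_of_real ((norm \<nu>)\<^sup>2 * ((real n)\<^sup>2 * t ^ (n - 1) / bergman_weight \<beta> n)))
      sums A2_inner \<beta> w1 w1"
    and "(\<lambda>n. cnj \<kappa> * \<nu> * cnj a * of_real (real n * t ^ (n - 1) / bergman_weight \<beta> n))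
      sums A2_inner \<beta> w0 w1"
proof -
  have a_cnj_a: "cnj a * a = of_real t"
    by (simp add: t_def mult.commute flip: complex_norm_square)
  have "cnj (a ^ n * \<kappa>) * (a ^ n * \<kappa>) = (cnj a * a) ^ n * (\<kappa> * cnj \<kappa>)" for n
    by (simp add: power_mult_distrib mult_ac)
  also have "\<dots> n = of_real (t ^ n * (norm \<kappa>)\<^sup>2)" for n
    unfolding a_cnj_a complex_norm_square[symmetric] by simp
  finally show "(\<lambda>n. complex_of_real ((norm \<kappa>)\<^sup>2 * (t ^ n / bergman_weight \<beta> n))) sums A2_inner \<beta> w0 w0"
    using A2_inner_sums_monomials[OF w0 w0] by (simp add: x0 mult_ac)
  have "cnj (of_nat n * a ^ (n - 1) * \<nu>) * (of_nat n * a ^ (n - 1) * \<nu>)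
      = (of_nat n)\<^sup>2 * (cnj a * a) ^ (n - 1) * (\<nu> * cnj \<nu>)" for n
    by (simp add: power_mult_distrib power2_eq_square mult_ac)
  also have "\<dots> n = of_real ((real n)\<^sup>2 * t ^ (n - 1) * (norm \<nu>)\<^sup>2)" for n
    unfolding a_cnj_a complex_norm_square[symmetric] by simp
  finally show "(\<lambda>n. complex_of_real ((norm \<nu>)\<^sup>2 * ((real n)\<^sup>2 * t ^ (n - 1) / bergman_weight \<beta> n)))
      sums A2_inner \<beta> w1 w1"
    using A2_inner_sums_monomials[OF w1 w1] by (simp add: x1 mult_ac)
  have "cnj (a ^ n * \<kappa>) * (of_nat n * a ^ (n - 1) * \<nu>) / of_real (bergman_weight \<beta> n)
      = cnj \<kappa> * \<nu> * cnj a * of_real (real n * t ^ (n - 1) / bergman_weight \<beta> n)" for n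
  proof (cases n)
    case (Suc m)
    have "a ^ m * cnj a ^ m = of_real t ^ m"
      using a_cnj_a by (metis mult.commute power_mult_distrib)
    then show ?thesis
      using Suc by (simp add: mult_ac)
  qed simp
  then show "(\<lambda>n. cnj \<kappa> * \<nu> * cnj a * of_real (real n * t ^ (n - 1) / bergman_weight \<beta> n))
      sums A2_inner \<beta> w0 w1"
    using A2_inner_sums_monomials[OF w0 w1] by (simp only: x0 x1)
qed

lemma gram_series_identity:
  fixes a \<kappa> \<nu> :: complex
  defines "t \<equiv> (norm a)\<^sup>2"
  assumes a: "0 < norm a" "norm a < 1" and "0 < N"
    and S0: "(\<lambda>n. complex_of_real ((norm \<kappa>)\<^sup>2 * (t ^ n / bergman_weight \<beta> n))) sums 1"
    and S1: "(\<lambda>n. complex_of_real ((norm \<nu>)\<^sup>2 * ((real n)\<^sup>2 * t ^ (n - 1) / bergman_weight \<beta> n)))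
      sums of_real N"
    and S01: "(\<lambda>n. cnj \<kappa> * \<nu> * cnj a * of_real (real n * t ^ (n - 1) / bergman_weight \<beta> n)) sums a"
  shows "N = t + 1 / (\<beta> + 2)"
proof -
  have t: "0 \<le> t" "t < 1"
    using a by (auto simp: t_def power_less_one_iff abs_square_less_1)
  define P where "P n = t ^ n / bergman_weight \<beta> n" for n
  define Q where "Q n = real n * t ^ (n - 1) / bergman_weight \<beta> n" for n
  define R where "R n = (real n)\<^sup>2 * t ^ (n - 1) / bergman_weight \<beta> n" for n
  have "(\<lambda>n. (norm \<kappa>)\<^sup>2 * P n) sums 1"
    using S0[unfolded sums_complex_of_real_iff] by (simp add: P_def)
  from sums_mult_nonzero_sum[OF this]
  have \<kappa>: "(norm \<kappa>)\<^sup>2 \<noteq> 0" and P_sums: "P sums (1 / (norm \<kappa>)\<^sup>2)"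
    by simp_all
  have "(\<lambda>n. (norm \<nu>)\<^sup>2 * R n) sums N"
    using S1[unfolded sums_complex_of_real_iff] by (simp add: R_def)
  from sums_mult_nonzero_sum[OF this]
  have \<nu>: "(norm \<nu>)\<^sup>2 \<noteq> 0" and R_sums: "R sums (N / (norm \<nu>)\<^sup>2)"
    using \<open>0 < N\<close> by simp_all
  have Q_le: "norm (Q n) \<le> R n" for n
  proof -
    have "real n \<le> (real n)\<^sup>2" by (cases n) (auto simp: power2_eq_square)
    then show ?thesis
      using bergman_weight_pos[of n] t by (simp add: Q_def R_def divide_right_mono mult_right_mono)
  qed
  then have "summable Q"
    by (intro summable_comparison_test'[OF sums_summable[OF R_sums], where N = 0])
  then have Q_sums: "Q sums suminf Q"
    by (rule summable_sums)
  have "(\<lambda>n. cnj \<kappa> * \<nu> * cnj a * of_real (Q n)) sums a"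
    unfolding Q_def using S01 .
  moreover have "(\<lambda>n. cnj \<kappa> * \<nu> * cnj a * of_real (Q n)) sums (cnj \<kappa> * \<nu> * cnj a * of_real (suminf Q))"
    using Q_sums by (intro sums_mult) (simp add: sums_of_real_iff)
  ultimately have "norm a = norm \<kappa> * norm \<nu> * norm a * \<bar>suminf Q\<bar>"
    by (metis sums_unique2 norm_mult norm_of_real complex_mod_cnj)
  moreover have "0 \<le> suminf Q"
    using bergman_weight_pos t by (intro suminf_nonneg[OF \<open>summable Q\<close>]) (simp add: Q_def less_imp_le)
  ultimately have "norm a * (norm \<kappa> * norm \<nu> * suminf Q) = norm a * 1"
    by (simp add: mult_ac)
  then have q: "suminf Q = 1 / (norm \<kappa> * norm \<nu>)"
    using a(1) \<kappa> \<nu> by (simp add: field_simps)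
  have "N * (suminf Q)\<^sup>2 = (1 / (norm \<kappa>)\<^sup>2) * (N / (norm \<nu>)\<^sup>2)"
    by (simp add: q power_divide power_mult_distrib)
  also have "\<dots> = (t + 1 / (\<beta> + 2)) * (suminf Q)\<^sup>2"
    unfolding Q_def
    by (rule bergman_weight_series_product[OF t(2) P_sums[unfolded P_def] Q_sums[unfolded Q_def] R_sums[unfolded R_def]])
  finally show ?thesis
    using \<kappa> \<nu> by (simp add: q)
qed

text \<open>The Gram matrix of \<open>w0, w1\<close> forces \<open>\<parallel>disc_auto a\<parallel>\<^sup>2 = |a|\<^sup>2 + 1/(\<beta>+2)\<close>, which
  \<open>A2_inner_disc_auto_self\<close> rules out.\<close>
lemma adjoint_eigenvectors_gram_contradiction:
  assumes a: "0 < norm a" "norm a < 1" and l: "norm l < 1" "l \<noteq> 0"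
    and w0: "w0 \<in> A2 \<beta>" and w1: "w1 \<in> A2 \<beta>"
    and fixed: "\<And>f. f \<in> A2 \<beta> \<Longrightarrow> A2_inner \<beta> (comp_op (conj_dilation a l) f) w0 = A2_inner \<beta> f w0"
    and eigen: "\<And>f. f \<in> A2 \<beta> \<Longrightarrow> A2_inner \<beta> (comp_op (conj_dilation a l) f) w1 = l * A2_inner \<beta> f w1"
    and gram: "A2_inner \<beta> w0 w0 = 1" "A2_inner \<beta> w0 w1 = a"
      "A2_inner \<beta> w1 w1 = A2_inner \<beta> (disc_restrict (disc_auto a)) (disc_restrict (disc_auto a))"
  shows False
proof -
  obtain N where N: "A2_inner \<beta> (disc_restrict (disc_auto a)) (disc_restrict (disc_auto a)) = of_real N"
    "(norm a)\<^sup>2 \<le> N" "N < (norm a)\<^sup>2 + 1 / (\<beta> + 2)"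
    using A2_inner_disc_auto_self[OF a] by blast
  define \<kappa> where "\<kappa> = A2_inner \<beta> (disc_restrict (\<lambda>z. 1)) w0"
  define \<nu> where "\<nu> = (a * cnj a - 1) * A2_inner \<beta> (disc_restrict (disc_auto a)) w1"
  have x0: "A2_inner \<beta> (disc_restrict (\<lambda>z. z ^ n)) w0 = a ^ n * \<kappa>" for n
    unfolding \<kappa>_def using A2_inner_monomial_if_adjoint_fixed[OF a(2) l(1) w0 fixed] .
  have x1: "A2_inner \<beta> (disc_restrict (\<lambda>z. z ^ n)) w1 = of_nat n * a ^ (n - 1) * \<nu>" for n
    unfolding \<nu>_def using A2_inner_monomial_if_adjoint_eigen[OF a(2) l w1 eigen] by (simp add: mult_ac)
  note gram_series = A2_gram_series[OF w0 w1 x0 x1, unfolded gram N(1)]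
  have "0 < N"
    using a(1) N(2) by (meson order.strict_trans2 zero_less_power)
  with gram_series have "N = (norm a)\<^sup>2 + 1 / (\<beta> + 2)"
    by (intro gram_series_identity[OF a]) auto
  with N(3) show False by simp
qed

lemma conj_dilation_not_complex_symmetric:
  assumes a: "a \<in> ball 0 1 - {0}" and l: "l \<in> ball 0 1 - {0}"
  shows "\<not> complex_symmetric_on (A2 \<beta>) (A2_inner \<beta>) (comp_op (conj_dilation a l))"
proof
  let ?T = "comp_op (conj_dilation a l)"
  have a': "0 < norm a" "norm a < 1" and l': "norm l < 1" "l \<noteq> 0"
    using assms by auto
  assume "complex_symmetric_on (A2 \<beta>) (A2_inner \<beta>) ?T"
  then obtain C S where C: "conjugation_on (A2 \<beta>) (A2_inner \<beta>) C"
    and S: "is_adjoint_on (A2 \<beta>) (A2_inner \<beta>) ?T S" and CS: "\<forall>f\<in>A2 \<beta>. C (?T f) = S (C f)"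
    unfolding complex_symmetric_on_def by blast
  have C_in: "C f \<in> A2 \<beta>" if "f \<in> A2 \<beta>" for f
    using C that by (auto simp: conjugation_on_def)
  have C_iso: "A2_inner \<beta> (C f) (C g) = A2_inner \<beta> g f" if "f \<in> A2 \<beta>" "g \<in> A2 \<beta>" for f g
    using C that by (simp add: conjugation_on_def)
  have eigenvector: "A2_inner \<beta> (?T f) (C u) = \<mu> * A2_inner \<beta> f (C u)"
    if "u \<in> A2 \<beta>" "?T u = (\<lambda>z. \<mu> * u z)" "f \<in> A2 \<beta>" for u \<mu> f
    by (rule complex_symmetric_adjoint_eigenvector[OF C S CS _ that]) (rule A2_inner_scale_right)
  define u0 where "u0 = disc_restrict (\<lambda>z. 1)"
  define u1 where "u1 = disc_restrict (disc_auto a)"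
  have u0: "u0 \<in> A2 \<beta>"
    unfolding u0_def by (rule disc_restrict_in_A2[of _ 2]) auto
  have u1: "u1 \<in> A2 \<beta>"
    unfolding u1_def using a'(2) by (rule disc_restrict_disc_auto_in_A2)
  have T_u0: "?T u0 = (\<lambda>z. 1 * u0 z)"
    unfolding u0_def comp_op_conj_dilation_disc_restrict[OF a'(2) less_imp_le[OF l'(1)]] by simp
  have fixed: "A2_inner \<beta> (?T f) (C u0) = A2_inner \<beta> f (C u0)" if "f \<in> A2 \<beta>" for f
    using eigenvector[OF u0 T_u0 that] by simp
  have T_u1: "?T u1 = (\<lambda>z. l * u1 z)"
    unfolding u1_def comp_op_conj_dilation_disc_restrict[OF a'(2) less_imp_le[OF l'(1)]]
    by (rule ext) (simp add: disc_restrict_def disc_auto_conj_dilation[OF a'(2) less_imp_le[OF l'(1)], unfolded mem_ball_0])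
  note eigen = eigenvector[OF u1 T_u1]
  have "A2_inner \<beta> (C u0) (C u0) = 1"
    using C_iso[OF u0 u0] A2_inner_monomial_right[of u0 0]
    by (simp add: u0_def taylor_coeff_const)
  moreover have "A2_inner \<beta> (C u0) (C u1) = a"
    using C_iso[OF u0 u1] A2_inner_monomial_right[of u1 0] a'(2)
    by (simp add: u0_def u1_def taylor_coeff_disc_auto)
  moreover have "A2_inner \<beta> (C u1) (C u1) = A2_inner \<beta> u1 u1"
    using C_iso[OF u1 u1] .
  ultimately show False
    using adjoint_eigenvectors_gram_contradiction[OF a' l' C_in[OF u0] C_in[OF u1] fixed eigen]
    by (simp add: u1_def)
qed

end

theorem theorem5p2:
  fixes \<beta> :: nat and \<alpha> lam :: complex
  assumes "\<alpha> \<in> ball 0 1 - {0}" and "lam \<in> ball 0 1 - {0}"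
  shows "\<not> complex_symmetric_on (A2 (real \<beta>)) (A2_inner (real \<beta>))
            (comp_op (\<lambda>z. disc_auto \<alpha> (lam * disc_auto \<alpha> z)))"
proof -
  interpret weighted_bergman "real \<beta>"
    by unfold_locales simp
  show ?thesis
    using conj_dilation_not_complex_symmetric[OF assms] by (simp add: conj_dilation_def[abs_def])
qed

end
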